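(* Let $Id_{Gr}\colon Gr\to Gr$ be the identity functor of the category of groups. There is a natural isomorphism of functors $Gr\to Gr$ $$\Gamma_1\colon G^{ab}\xrightarrow{\simeq}T_1(Id_{Gr})(G)$$ such that $\Gamma_1(\bar g)=t_1(g)$ for $g\in G$.
   Context: Notation. - $G^{ab}=G/[G,G]$, with $\bar g$ the class of $g$. - For a reduced functor $F\colon Gr\to Gr$: $cr_2F(G,G)=\ker(F(G*G)\to F(G)\times F(G))$, induced by the two retractions of the free product $G*G$. - $T_1F(G)$ is the quotient of $F(G)$ by the image of $cr_2F(G,G)\subseteq F(G*G)$ under $F(\nabla)$ (a normal subgroup), where $\nabla\colon G*G\to G$ is the folding map; $t_1$ is the projection. *)

theory Defs
  imports "HOL-Algebra.Algebra"
begin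

text \<open>A letter is a pair (b, x): b = False means x lies in the first copy of G,
  b = True means x lies in the second copy.\<close>

fun fp_push :: "('a, 'm) monoid_scheme \<Rightarrow> bool \<times> 'a \<Rightarrow> (bool \<times> 'a) list \<Rightarrow> (bool \<times> 'a) list" where
  "fp_push G (b, x) [] = (if x = \<one>\<^bsub>G\<^esub> then [] else [(b, x)])"
| "fp_push G (b, x) ((c, y) # ws) =
     (if b = c then (if x \<otimes>\<^bsub>G\<^esub> y = \<one>\<^bsub>G\<^esub> then ws else (b, x \<otimes>\<^bsub>G\<^esub> y) # ws)
      else if x = \<one>\<^bsub>G\<^esub> then (c, y) # ws else (b, x) # (c, y) # ws)"

definition fp_reduced :: "('a, 'm) monoid_scheme \<Rightarrow> (bool \<times> 'a) list \<Rightarrow> bool" where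
  "fp_reduced G ws \<longleftrightarrow>
     (\<forall>(b, x) \<in> set ws. x \<in> carrier G \<and> x \<noteq> \<one>\<^bsub>G\<^esub>) \<and>
     (\<forall>i. Suc i < length ws \<longrightarrow> fst (ws ! i) \<noteq> fst (ws ! Suc i))"

definition free_prod_self :: "('a, 'm) monoid_scheme \<Rightarrow> (bool \<times> 'a) list monoid" where
  "free_prod_self G = \<lparr> carrier = {ws. fp_reduced G ws},
                        monoid.mult = (\<lambda>ws vs. foldr (fp_push G) ws vs),
                        one = [] \<rparr>"

definition fp_eval :: "('a, 'm) monoid_scheme \<Rightarrow> (bool \<Rightarrow> 'a \<Rightarrow> 'a) \<Rightarrow> (bool \<times> 'a) list \<Rightarrow> 'a" where
  "fp_eval G phi ws = foldr (\<lambda>(b, x) acc. phi b x \<otimes>\<^bsub>G\<^esub> acc) ws \<one>\<^bsub>G\<^esub>"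

text \<open>The two retractions r1 = (id, 1), r2 = (1, id) and the folding map nabla = (id, id).\<close>
definition fp_r1 :: "('a, 'm) monoid_scheme \<Rightarrow> (bool \<times> 'a) list \<Rightarrow> 'a" where
  "fp_r1 G = fp_eval G (\<lambda>b x. if b then \<one>\<^bsub>G\<^esub> else x)"

definition fp_r2 :: "('a, 'm) monoid_scheme \<Rightarrow> (bool \<times> 'a) list \<Rightarrow> 'a" where
  "fp_r2 G = fp_eval G (\<lambda>b x. if b then x else \<one>\<^bsub>G\<^esub>)"

definition fp_fold :: "('a, 'm) monoid_scheme \<Rightarrow> (bool \<times> 'a) list \<Rightarrow> 'a" where
  "fp_fold G = fp_eval G (\<lambda>b x. x)"

text \<open>cr_2 Id(G,G) = ker(G * G \<rightarrow> G \<times> G).\<close>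
definition cr2_id :: "('a, 'm) monoid_scheme \<Rightarrow> (bool \<times> 'a) list set" where
  "cr2_id G = {w \<in> carrier (free_prod_self G). fp_r1 G w = \<one>\<^bsub>G\<^esub> \<and> fp_r2 G w = \<one>\<^bsub>G\<^esub>}"

definition T1_kernel :: "('a, 'm) monoid_scheme \<Rightarrow> 'a set" where
  "T1_kernel G = fp_fold G ` cr2_id G"

text \<open>T_1(Id)(G) = G / nabla(cr_2 Id(G,G)); t_1(g) is the coset of g.\<close>
definition T1_id :: "('a, 'm) monoid_scheme \<Rightarrow> 'a set monoid" where
  "T1_id G = G Mod T1_kernel G"

text \<open>Abelianization G^ab = G/[G,G]; the class of g is the coset of g.\<close>
definition abelianization :: "('a, 'm) monoid_scheme \<Rightarrow> 'a set monoid" where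
  "abelianization G = G Mod derived G (carrier G)"

definition quot_map :: "('b, 'n) monoid_scheme \<Rightarrow> 'b set \<Rightarrow> ('a \<Rightarrow> 'b) \<Rightarrow> 'a set \<Rightarrow> 'b set" where
  "quot_map H N f C = N <#>\<^bsub>H\<^esub> (f ` C)"

end

theory Submission
  imports Defs
begin

text \<open>Evaluating words of the free product shows that the folding map sends every word
  killed by both retractions to a product of commutators (its image in any abelian quotient
  is the product of its two retractions), and conversely the word
  \<open>(a, 1)(1, c)(a\<inverse>, 1)(1, c\<inverse>)\<close> lies in the cross effect and folds to the commutator
  \<open>[a, c]\<close>. Hence \<open>\<nabla>(cr\<^sub>2 Id(G, G)) = [G, G]\<close>, so \<open>T\<^sub>1(Id)(G)\<close> and \<open>G\<^sup>a\<^sup>b\<close> are literally the same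
  quotient and \<open>\<Gamma>\<^sub>1\<close> is the identity.\<close>

lemma fp_reduced_Nil [simp]: "fp_reduced G []"
  by (simp add: fp_reduced_def)

lemma fp_reduced_Cons:
  "fp_reduced G ((b, x) # ws) \<longleftrightarrow>
     x \<in> carrier G \<and> x \<noteq> \<one>\<^bsub>G\<^esub> \<and> fp_reduced G ws \<and>
     (case ws of [] \<Rightarrow> True | (c, y) # _ \<Rightarrow> b \<noteq> c)"
proof -
  have "(\<forall>i. Suc i < length ((b, x) # ws) \<longrightarrow> fst (((b, x) # ws) ! i) \<noteq> fst (((b, x) # ws) ! Suc i))
    \<longleftrightarrow> (case ws of [] \<Rightarrow> True | (c, y) # _ \<Rightarrow> b \<noteq> c) \<and>
         (\<forall>i. Suc i < length ws \<longrightarrow> fst (ws ! i) \<noteq> fst (ws ! Suc i))"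
    by (cases ws) (auto simp: All_less_Suc2)
  then show ?thesis
    unfolding fp_reduced_def by auto
qed

lemma fp_eval_Nil [simp]: "fp_eval G phi [] = \<one>\<^bsub>G\<^esub>"
  by (simp add: fp_eval_def)

lemma fp_eval_Cons [simp]: "fp_eval G phi ((b, x) # ws) = phi b x \<otimes>\<^bsub>G\<^esub> fp_eval G phi ws"
  by (simp add: fp_eval_def)

context group
begin

lemma fp_eval_closed:
  assumes "\<And>b. phi b \<in> hom G G" and "snd ` set ws \<subseteq> carrier G"
  shows "fp_eval G phi ws \<in> carrier G"
  using assms(2) by (induction ws) (auto simp: hom_in_carrier[OF assms(1)])

lemma fp_eval_push:
  assumes phi: "\<And>b. phi b \<in> hom G G" and x: "x \<in> carrier G" and ws: "snd ` set ws \<subseteq> carrier G"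
  shows "fp_eval G phi (fp_push G (b, x) ws) = phi b x \<otimes> fp_eval G phi ws"
proof -
  have one: "phi c \<one> = \<one>" for c
    using hom_one[OF phi] by (simp add: is_group)
  have closed: "y \<in> carrier G \<Longrightarrow> phi c y \<in> carrier G" for c y
    using hom_in_carrier[OF phi] .
  show ?thesis
  proof (cases ws)
    case Nil
    then show ?thesis using x one closed by auto
  next
    case (Cons a ws')
    obtain c y where a: "a = (c, y)" by force
    have y: "y \<in> carrier G" and rest: "fp_eval G phi ws' \<in> carrier G"
      using ws Cons a fp_eval_closed[OF phi] by auto
    have mult: "phi b (x \<otimes> y) = phi b x \<otimes> phi b y"
      using hom_mult[OF phi x y] .
    show ?thesis
      using Cons a x y rest mult one closed
      by (auto simp: m_assoc[symmetric])
  qed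
qed

lemma fp_push_reduced:
  assumes x: "x \<in> carrier G" and ws: "fp_reduced G ws"
  shows "fp_reduced G (fp_push G (b, x) ws)"
proof (cases ws)
  case Nil
  then show ?thesis using x by (auto simp: fp_reduced_Cons)
next
  case (Cons a ws')
  obtain c y where "a = (c, y)" by force
  with ws Cons x show ?thesis
    by (auto simp: fp_reduced_Cons split: list.splits)
qed

text \<open>The product of \<open>G * G\<close> is \<open>foldr (fp_push G)\<close>; it accepts an arbitrary word on the
  left, which lets us reduce unreduced words such as commutator words.\<close>

lemma foldr_fp_push_reduced:
  assumes "snd ` set l \<subseteq> carrier G" and "fp_reduced G v"
  shows "fp_reduced G (foldr (fp_push G) l v)"
  using assms by (induction l) (auto intro: fp_push_reduced)

lemma fp_eval_foldr_push:
  assumes phi: "\<And>b. phi b \<in> hom G G"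
    and l: "snd ` set l \<subseteq> carrier G" and v: "fp_reduced G v"
  shows "fp_eval G phi (foldr (fp_push G) l v) = fp_eval G phi l \<otimes> fp_eval G phi v"
  using l
proof (induction l)
  case Nil
  have "snd ` set v \<subseteq> carrier G"
    using v by (auto simp: fp_reduced_def)
  then show ?case
    using fp_eval_closed[OF phi] by simp
next
  case (Cons a l)
  obtain b x where a: "a = (b, x)" by force
  have x: "x \<in> carrier G" and l: "snd ` set l \<subseteq> carrier G"
    using Cons.prems a by auto
  have "snd ` set (foldr (fp_push G) l v) \<subseteq> carrier G"
    using foldr_fp_push_reduced[OF l v] by (auto simp: fp_reduced_def)
  moreover have "snd ` set v \<subseteq> carrier G"
    using v by (auto simp: fp_reduced_def)
  ultimately show ?case
    using a x Cons.IH[OF l] fp_eval_push[OF phi x] fp_eval_closed[OF phi l]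
      fp_eval_closed[OF phi] hom_in_carrier[OF phi x]
    by (simp add: m_assoc)
qed

lemma fp_fold_r1_r2_letter_hom:
  "(\<lambda>x. x) \<in> hom G G"
  "(\<lambda>x. if b then \<one> else x) \<in> hom G G"
  "(\<lambda>x. if b then x else \<one>) \<in> hom G G"
  by (auto simp: hom_def)

lemma fp_fold_mem_T1_kernel:
  assumes l: "snd ` set l \<subseteq> carrier G"
    and r1: "fp_r1 G l = \<one>" and r2: "fp_r2 G l = \<one>"
  shows "fp_fold G l \<in> T1_kernel G"
proof -
  let ?w = "foldr (fp_push G) l []"
  have eval: "fp_eval G phi ?w = fp_eval G phi l" if "\<And>b. phi b \<in> hom G G" for phi
    using fp_eval_foldr_push[OF that l] fp_eval_closed[OF that l] by simp
  have "?w \<in> cr2_id G"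
    using foldr_fp_push_reduced[OF l] r1 r2 eval[of "\<lambda>b x. if b then \<one> else x"]
      eval[of "\<lambda>b x. if b then x else \<one>"] fp_fold_r1_r2_letter_hom
    by (simp add: cr2_id_def free_prod_self_def fp_r1_def fp_r2_def)
  moreover have "fp_fold G ?w = fp_fold G l"
    using eval[of "\<lambda>b x. x"] fp_fold_r1_r2_letter_hom by (simp add: fp_fold_def)
  ultimately show ?thesis
    unfolding T1_kernel_def by (metis image_eqI)
qed

lemma T1_kernel_mult_closed:
  assumes "h1 \<in> T1_kernel G" and "h2 \<in> T1_kernel G"
  shows "h1 \<otimes> h2 \<in> T1_kernel G"
proof -
  obtain w v where w: "w \<in> cr2_id G" "h1 = fp_fold G w" and v: "v \<in> cr2_id G" "h2 = fp_fold G v"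
    using assms unfolding T1_kernel_def by blast
  have wr: "fp_reduced G w" and vr: "fp_reduced G v"
    using w v by (auto simp: cr2_id_def free_prod_self_def)
  then have wl: "snd ` set w \<subseteq> carrier G"
    by (auto simp: fp_reduced_def)
  have "foldr (fp_push G) w v \<in> cr2_id G"
    using foldr_fp_push_reduced[OF wl vr] fp_eval_foldr_push[OF _ wl vr] w v fp_fold_r1_r2_letter_hom
    by (auto simp: cr2_id_def free_prod_self_def fp_r1_def fp_r2_def)
  moreover have "fp_fold G (foldr (fp_push G) w v) = h1 \<otimes> h2"
    using fp_eval_foldr_push[OF _ wl vr] fp_fold_r1_r2_letter_hom w v by (simp add: fp_fold_def)
  ultimately show ?thesis
    unfolding T1_kernel_def by (metis image_eqI)
qed

lemma commutator_mem_T1_kernel: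
  assumes "a \<in> carrier G" and "c \<in> carrier G"
  shows "a \<otimes> c \<otimes> inv a \<otimes> inv c \<in> T1_kernel G"
proof -
  have "fp_fold G [(False, a), (True, c), (False, inv a), (True, inv c)] \<in> T1_kernel G"
    using assms by (intro fp_fold_mem_T1_kernel) (simp_all add: fp_r1_def fp_r2_def)
  then show ?thesis
    using assms by (simp add: fp_fold_def m_assoc)
qed

lemma derived_subset_T1_kernel: "derived G (carrier G) \<subseteq> T1_kernel G"
proof
  fix z assume "z \<in> derived G (carrier G)"
  then show "z \<in> T1_kernel G"
    unfolding derived_def
  proof (induction rule: generate.induct)
    case one
    show ?case
      using fp_fold_mem_T1_kernel[of "[]"] by (simp add: fp_r1_def fp_r2_def fp_fold_def)
  next
    case (incl h)
    then show ?case
      by (auto intro: commutator_mem_T1_kernel)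
  next
    case (inv h)
    then obtain a c where ac: "a \<in> carrier G" "c \<in> carrier G" "h = a \<otimes> c \<otimes> inv a \<otimes> inv c"
      by blast
    then have "inv h = c \<otimes> a \<otimes> inv c \<otimes> inv a"
      by (simp add: inv_mult_group m_assoc)
    then show ?case
      using ac commutator_mem_T1_kernel by simp
  next
    case (eng h1 h2)
    from eng.IH show ?case
      by (rule T1_kernel_mult_closed)
  qed
qed

text \<open>In an abelian target the letters from the two copies can be sorted apart, so the
  folding map factors through the two retractions.\<close>

lemma hom_comm_fp_fold:
  assumes "comm_group A" and h: "h \<in> hom G A" and "snd ` set w \<subseteq> carrier G"
  shows "h (fp_fold G w) = h (fp_r1 G w) \<otimes>\<^bsub>A\<^esub> h (fp_r2 G w)"
proof -
  interpret A: comm_group A by fact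
  have h_one: "h \<one> = \<one>\<^bsub>A\<^esub>"
    using hom_one[OF h is_group A.is_group] .
  show ?thesis
    using \<open>snd ` set w \<subseteq> carrier G\<close>
  proof (induction w)
    case Nil
    show ?case
      using h_one by (simp add: fp_fold_def fp_r1_def fp_r2_def)
  next
    case (Cons a w)
    obtain b x where a: "a = (b, x)" by force
    have x: "x \<in> carrier G" and w: "snd ` set w \<subseteq> carrier G"
      using Cons.prems a by auto
    have closed: "fp_fold G w \<in> carrier G" "fp_r1 G w \<in> carrier G" "fp_r2 G w \<in> carrier G"
      using fp_eval_closed[OF _ w] fp_fold_r1_r2_letter_hom
      by (auto simp: fp_fold_def fp_r1_def fp_r2_def)
    have "h (fp_fold G (a # w)) = h x \<otimes>\<^bsub>A\<^esub> (h (fp_r1 G w) \<otimes>\<^bsub>A\<^esub> h (fp_r2 G w))"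
      using a x closed Cons.IH[OF w] hom_mult[OF h] by (simp add: fp_fold_def)
    also have "\<dots> = h (fp_r1 G (a # w)) \<otimes>\<^bsub>A\<^esub> h (fp_r2 G (a # w))"
      using a x closed hom_mult[OF h] hom_in_carrier[OF h] h_one
      by (cases b) (simp_all add: fp_r1_def fp_r2_def A.m_ac)
    finally show ?case .
  qed
qed

lemma T1_kernel_subset_derived: "T1_kernel G \<subseteq> derived G (carrier G)"
proof
  let ?D = "derived G (carrier G)"
  interpret D: normal ?D G
    by (rule derived_self_is_normal)
  fix z assume "z \<in> T1_kernel G"
  then obtain w where w: "w \<in> cr2_id G" "z = fp_fold G w"
    unfolding T1_kernel_def by blast
  then have wl: "snd ` set w \<subseteq> carrier G" and r: "fp_r1 G w = \<one>" "fp_r2 G w = \<one>"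
    by (auto simp: cr2_id_def free_prod_self_def fp_reduced_def)
  have z: "z \<in> carrier G"
    using w fp_eval_closed[OF _ wl] fp_fold_r1_r2_letter_hom by (simp add: fp_fold_def)
  have "?D #> z = ?D #> \<one> <#> (?D #> \<one>)"
    using hom_comm_fp_fold[OF derived_quot_is_comm_group D.r_coset_hom_Mod wl] w r
    by simp
  also have "\<dots> = ?D"
    using D.rcos_sum[of \<one> \<one>] coset_mult_one[OF D.subset] by simp
  finally show "z \<in> ?D"
    using coset_join1 z D.subgroup_axioms by blast
qed

lemma T1_kernel_eq_derived: "T1_kernel G = derived G (carrier G)"
  using T1_kernel_subset_derived derived_subset_T1_kernel by blast

end

theorem proposition2p2:
  fixes G :: "('a, 'm) monoid_scheme" and H :: "('b, 'n) monoid_scheme"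
  assumes "group G" and "group H"
  shows "\<exists>\<Gamma>G \<Gamma>H.
     T1_kernel G \<lhd> G \<and> T1_kernel H \<lhd> H \<and>
     \<Gamma>G \<in> iso (abelianization G) (T1_id G) \<and>
     (\<forall>g \<in> carrier G. \<Gamma>G (derived G (carrier G) #>\<^bsub>G\<^esub> g) = T1_kernel G #>\<^bsub>G\<^esub> g) \<and>
     \<Gamma>H \<in> iso (abelianization H) (T1_id H) \<and>
     (\<forall>h \<in> carrier H. \<Gamma>H (derived H (carrier H) #>\<^bsub>H\<^esub> h) = T1_kernel H #>\<^bsub>H\<^esub> h) \<and>
     (\<forall>f \<in> hom G H. \<forall>C \<in> carrier (abelianization G).
        \<Gamma>H (quot_map H (derived H (carrier H)) f C) = quot_map H (T1_kernel H) f (\<Gamma>G C))"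
proof (intro exI conjI)
  show "(\<lambda>C. C) \<in> iso (abelianization G) (T1_id G)" "(\<lambda>C. C) \<in> iso (abelianization H) (T1_id H)"
    using assms by (simp_all add: group.T1_kernel_eq_derived T1_id_def abelianization_def iso_set_refl)
  show "T1_kernel G \<lhd> G" "T1_kernel H \<lhd> H"
    using assms by (simp_all add: group.T1_kernel_eq_derived group.derived_self_is_normal)
qed (use assms in \<open>simp_all add: group.T1_kernel_eq_derived\<close>)

end
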